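(* Let $(q_n)_{n\ge1}$ be the Fibonacci Quilt sequence. Then (i) $q_{n+1}=q_n+q_{n-4}$ for all $n\ge6$; (ii) $q_{n+1}=q_{n-1}+q_{n-2}$ for all $n\ge5$; (iii) $\sum_{i=1}^n q_i = q_{n+5}-6$ for all $n\ge1$.
   Context: Given an increasing sequence of positive integers $(q_i)_{i\ge1}$, an FQ-legal decomposition of an integer $m\ge0$ is an expression $m=q_{\ell_1}+q_{\ell_2}+\cdots+q_{\ell_t}$ ($t\ge0$, the empty sum representing $0$) with distinct indices $\ell_1>\ell_2>\cdots>\ell_t$ such that $|\ell_i-\ell_j|\notin\{1,3,4\}$ for all $i,j$, and $\{1,3\}\not\subset\{\ell_1,\dots,\ell_t\}$. The Fibonacci Quilt sequence is the increasing sequence of positive integers $(q_i)_{i\ge1}$ in which each $q_i$ is the smallest positive integer having no FQ-legal decomposition using only $q_1,\dots,q_{i-1}$. Its first terms are $1,2,3,4,5,7,9,12,16,21,28,37,49,\dots$. *)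

theory Defs
  imports Main
begin

definition FQ_legal :: "nat set \<Rightarrow> bool" where
  "FQ_legal S \<longleftrightarrow> (\<forall>i\<in>S. \<forall>j\<in>S. \<bar>int i - int j\<bar> \<notin> {1, 3, 4}) \<and> \<not> {1, 3} \<subseteq> S"

definition FQ_next :: "nat list \<Rightarrow> nat" where
  "FQ_next xs = (LEAST m. 0 < m \<and>
     \<not> (\<exists>S. S \<subseteq> {1..length xs} \<and> FQ_legal S \<and> (\<Sum>i\<in>S. xs ! (i - 1)) = m))"

fun FQ_list :: "nat \<Rightarrow> nat list" where
  "FQ_list 0 = []"
| "FQ_list (Suc n) = FQ_list n @ [FQ_next (FQ_list n)]"

text \<open>The Fibonacci Quilt sequence, 1-indexed: fq 1 = 1, fq 2 = 2, ... (fq 0 is junk).\<close>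
definition fq :: "nat \<Rightarrow> nat" where
  "fq n = FQ_list n ! (n - 1)"

end

theory Submission
  imports Defs
begin

text \<open>The Fibonacci Quilt sequence coincides with \<open>quilt\<close>: \<open>1, 2, 3, 4, 5\<close> followed by
  \<open>quilt (k+5) = quilt (k+3) + quilt (k+2)\<close>. FQ-legal sets are rigid: below the largest index \<open>n\<close>
  of a legal set only \<open>n - 2\<close> and indices \<open>\<le> n - 5\<close> can occur, and once \<open>n - 2\<close> occurs only
  indices \<open>\<le> n - 7\<close>. Strong induction over this structure shows that legal sums over \<open>{1..m}\<close>
  stay below \<open>quilt (m+3)\<close>, that \<open>quilt (n+1)\<close> is not a legal sum over \<open>{1..n}\<close>, and, greedily
  via \<open>quilt (n+1) = quilt n + quilt (n-4)\<close>, that every smaller number is one. So \<open>quilt (n+1)\<close> is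
  exactly the term the construction picks next, and the three identities are properties of the
  recurrence.\<close>

fun quilt :: "nat \<Rightarrow> nat" where
  "quilt 0 = 0"
| "quilt (Suc 0) = 1"
| "quilt (Suc (Suc 0)) = 2"
| "quilt (Suc (Suc (Suc 0))) = 3"
| "quilt (Suc (Suc (Suc (Suc 0)))) = 4"
| "quilt (Suc (Suc (Suc (Suc (Suc n))))) = quilt (Suc (Suc (Suc n))) + quilt (Suc (Suc n))"

lemma quilt_rec: "5 \<le> k \<Longrightarrow> quilt k = quilt (k - 2) + quilt (k - 3)"
  by (cases k rule: quilt.cases) auto

lemma quilt_less_Suc: "quilt n < quilt (Suc n)"
proof (induction n rule: less_induct)
  case (less n)
  show ?case
  proof (cases "n \<le> 4")
    case True
    then show ?thesis by (auto simp: le_Suc_eq numeral_eq_Suc)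
  next
    case False
    have "quilt (n - 3) < quilt (n - 2)" "quilt (n - 2) < quilt (n - 1)"
      using less[of "n - 3"] less[of "n - 2"] False by (simp_all add: Suc_diff_Suc numeral_eq_Suc)
    then show ?thesis
      using quilt_rec[of n] quilt_rec[of "Suc n"] False by simp
  qed
qed

lemma strict_mono_quilt: "strict_mono quilt"
  by (simp add: quilt_less_Suc strict_mono_Suc_iff)

lemma quilt_less: "m < n \<Longrightarrow> quilt m < quilt n"
  using strict_mono_quilt by (rule strict_monoD)

lemma quilt_mono: "m \<le> n \<Longrightarrow> quilt m \<le> quilt n"
  using strict_mono_quilt strict_mono_less_eq by blast

lemma quilt_Suc_eq: "6 \<le> n \<Longrightarrow> quilt (n + 1) = quilt n + quilt (n - 4)"
  using quilt_rec[of "n + 1"] quilt_rec[of n] quilt_rec[of "n - 1"] by (simp add: numeral_eq_Suc)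

lemma quilt_add_le: "quilt m + quilt (m + 1) \<le> quilt (m + 3)"
proof (cases "2 \<le> m")
  case True
  then show ?thesis using quilt_rec[of "m + 3"] by simp
next
  case False
  then have "m = 0 \<or> m = 1" by auto
  then show ?thesis by (auto simp: numeral_eq_Suc)
qed

lemma sum_quilt_atLeastAtMost: "(\<Sum>i=1..n+1. quilt i) + 6 = quilt (n + 6)"
proof (induction n)
  case 0
  then show ?case by (simp add: numeral_eq_Suc)
next
  case (Suc n)
  then show ?case using quilt_Suc_eq[of "n + 6"] by simp
qed

lemma FQ_legal_subset: "FQ_legal S \<Longrightarrow> T \<subseteq> S \<Longrightarrow> FQ_legal T"
  unfolding FQ_legal_def by blast

lemma FQ_legal_diff:
  assumes "FQ_legal S" "i \<in> S" "j \<in> S" "j < i"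
  shows "i - j \<notin> {1, 3, 4}"
proof -
  have "\<bar>int i - int j\<bar> = int (i - j)" using \<open>j < i\<close> by simp
  then show ?thesis using assms unfolding FQ_legal_def by fastforce
qed

lemma FQ_legal_remove_max:
  assumes legal: "FQ_legal S" and sub: "S \<subseteq> {1..n}" and top: "n \<in> S"
  obtains "S - {n} \<subseteq> {1..n - 5}"
  | "4 \<le> n" "n - 2 \<in> S" "S - {n, n - 2} \<subseteq> {1..n - 7}"
proof -
  have below_top: "1 \<le> x \<and> (x + 2 = n \<or> x + 5 \<le> n)" if "x \<in> S - {n}" for x
  proof -
    have "1 \<le> x" "x < n" using that sub by (auto simp: subset_iff)
    then show ?thesis using FQ_legal_diff[OF legal top, of x] that by auto
  qed
  show thesis
  proof (cases "2 \<le> n \<and> n - 2 \<in> S")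
    case False
    then have "S - {n} \<subseteq> {1..n - 5}" using below_top by fastforce
    then show thesis by (rule that(1))
  next
    case True
    have "n \<noteq> 2" using True sub by auto
    moreover have "n \<noteq> 3" using True top legal unfolding FQ_legal_def by auto
    ultimately have "4 \<le> n" using True by auto
    have "x + 7 \<le> n" if x: "x \<in> S - {n, n - 2}" for x
    proof -
      have "x + 5 \<le> n" using below_top[of x] x by auto
      moreover have "n - 2 - x \<notin> {1, 3, 4}"
        using FQ_legal_diff[OF legal _ _, of "n - 2" x] True x \<open>x + 5 \<le> n\<close> by auto
      ultimately show ?thesis by auto
    qed
    then have "S - {n, n - 2} \<subseteq> {1..n - 7}" using below_top by fastforce
    with \<open>4 \<le> n\<close> True show thesis by (intro that(2)) auto
  qed
qed

lemma sum_quilt_less: "FQ_legal S \<Longrightarrow> S \<subseteq> {1..m} \<Longrightarrow> sum quilt S < quilt (m + 3)"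
proof (induction m arbitrary: S rule: less_induct)
  case (less m)
  have fin: "finite S" using less.prems(2) finite_subset by blast
  show ?case
  proof (cases "m \<in> S")
    case False
    show ?thesis
    proof (cases "m = 0")
      case True
      then show ?thesis using less.prems(2) by (simp add: numeral_eq_Suc)
    next
      case False
      have "S \<subseteq> {1..m - 1}" using less.prems(2) \<open>m \<notin> S\<close> by (auto simp: subset_iff le_less)
      then have "sum quilt S < quilt (m - 1 + 3)" using less.IH[of "m - 1"] less.prems(1) False by simp
      also have "\<dots> \<le> quilt (m + 3)" by (rule quilt_mono) simp
      finally show ?thesis .
    qed
  next
    case True
    have split: "sum quilt S = quilt m + sum quilt (S - {m})" using fin True by (simp add: sum.remove)
    from FQ_legal_remove_max[OF less.prems True] show ?thesis
    proof cases
      case 1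
      have "sum quilt (S - {m}) < quilt (m + 1)"
      proof (cases "S - {m} = {}")
        case True
        show ?thesis unfolding True using quilt_less[of 0 "m + 1"] by simp
      next
        case False
        then have "6 \<le> m" using 1 by auto
        have "sum quilt (S - {m}) < quilt (m - 5 + 3)"
          using less.IH[of "m - 5"] 1 FQ_legal_subset[OF less.prems(1)] \<open>6 \<le> m\<close> by auto
        also have "\<dots> \<le> quilt (m + 1)" by (rule quilt_mono) (use \<open>6 \<le> m\<close> in simp)
        finally show ?thesis .
      qed
      then show ?thesis using split quilt_add_le[of m] by simp
    next
      case 2
      have split2: "sum quilt (S - {m}) = quilt (m - 2) + sum quilt (S - {m, m - 2})"
        using sum.remove[of "S - {m}" "m - 2" quilt] fin 2 by (simp add: Diff_insert2[symmetric] insert_commute)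
      have "sum quilt (S - {m, m - 2}) < quilt (m - 7 + 3)"
        using less.IH[of "m - 7"] 2 FQ_legal_subset[OF less.prems(1)] by auto
      also have "\<dots> \<le> quilt (m - 1)" by (rule quilt_mono) (use 2 in simp)
      finally have "sum quilt (S - {m, m - 2}) < quilt (m - 1)" .
      moreover have "quilt (m + 1) = quilt (m - 1) + quilt (m - 2)" using quilt_rec[of "m + 1"] 2 by simp
      ultimately show ?thesis using split split2 quilt_add_le[of m] by simp
    qed
  qed
qed

lemma sum_quilt_neq_small: "n \<le> 5 \<Longrightarrow> FQ_legal S \<Longrightarrow> S \<subseteq> {1..n} \<Longrightarrow> sum quilt S \<noteq> quilt (Suc n)"
proof -
  have "\<forall>S\<in>Pow {1..5}. FQ_legal S \<longrightarrow> (\<forall>n\<le>5. S \<subseteq> {1..n} \<longrightarrow> sum quilt S \<noteq> quilt (Suc n))"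
    by (simp add: atLeastAtMost_insertL[symmetric] Pow_insert FQ_legal_def numeral_eq_Suc le_Suc_eq)
  moreover assume "n \<le> 5" "FQ_legal S" "S \<subseteq> {1..n}"
  ultimately show ?thesis by fastforce
qed

lemma sum_quilt_neq_if_max:
  assumes IH: "\<And>k T. k < n \<Longrightarrow> FQ_legal T \<Longrightarrow> T \<subseteq> {1..k} \<Longrightarrow> sum quilt T \<noteq> quilt (Suc k)"
    and "6 \<le> n" and legal: "FQ_legal S" and sub: "S \<subseteq> {1..n}" and top: "n \<in> S"
  shows "sum quilt S \<noteq> quilt (Suc n)"
proof -
  have fin: "finite S" using sub finite_subset by blast
  have split: "sum quilt S = quilt n + sum quilt (S - {n})" using fin top by (simp add: sum.remove)
  have succ: "quilt (Suc n) = quilt n + quilt (Suc (n - 5))"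
    using quilt_Suc_eq[OF \<open>6 \<le> n\<close>] \<open>6 \<le> n\<close> by (simp add: Suc_diff_Suc numeral_eq_Suc)
  from FQ_legal_remove_max[OF legal sub top] show ?thesis
  proof cases
    case 1
    then show ?thesis
      using IH[of "n - 5" "S - {n}"] FQ_legal_subset[OF legal] split succ \<open>6 \<le> n\<close> by auto
  next
    case 2
    then have "quilt (n - 2) \<le> sum quilt (S - {n})" using fin \<open>6 \<le> n\<close> by (intro member_le_sum) auto
    moreover have "quilt (Suc (n - 5)) < quilt (n - 2)" by (rule quilt_less) (use \<open>6 \<le> n\<close> in simp)
    ultimately show ?thesis using split succ by simp
  qed
qed

lemma sum_quilt_neq_if_pred_max:
  assumes IH: "\<And>k T. k < n \<Longrightarrow> FQ_legal T \<Longrightarrow> T \<subseteq> {1..k} \<Longrightarrow> sum quilt T \<noteq> quilt (Suc k)"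
    and "6 \<le> n" and legal: "FQ_legal S" and sub: "S \<subseteq> {1..n}" and "n \<notin> S" and top: "n - 1 \<in> S"
  shows "sum quilt S \<noteq> quilt (Suc n)"
proof -
  have fin: "finite S" using sub finite_subset by blast
  have sub': "S \<subseteq> {1..n - 1}" using sub \<open>n \<notin> S\<close> by (auto simp: subset_iff le_less)
  have split: "sum quilt S = quilt (n - 1) + sum quilt (S - {n - 1})" using fin top by (simp add: sum.remove)
  have succ: "quilt (Suc n) = quilt (n - 1) + quilt (n - 2)" using quilt_rec[of "Suc n"] \<open>6 \<le> n\<close> by simp
  from FQ_legal_remove_max[OF legal sub' top] show ?thesis
  proof cases
    case 1
    then have "sum quilt (S - {n - 1}) < quilt (n - 1 - 5 + 3)"
      using sum_quilt_less FQ_legal_subset[OF legal] by blast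
    also have "\<dots> < quilt (n - 2)" by (rule quilt_less) (use \<open>6 \<le> n\<close> in simp)
    finally show ?thesis using split succ by simp
  next
    case 2
    have split2: "sum quilt (S - {n - 1}) = quilt (n - 3) + sum quilt (S - {n - 1, n - 3})"
      using sum.remove[of "S - {n - 1}" "n - 3" quilt] fin 2 \<open>6 \<le> n\<close>
      by (simp add: Diff_insert2[symmetric] insert_commute numeral_eq_Suc)
    have "sum quilt (S - {n - 1, n - 3}) \<noteq> quilt (n - 2) - quilt (n - 3)"
    proof (cases "9 \<le> n")
      case True
      have "quilt (n - 2) = quilt (n - 3) + quilt (Suc (n - 8))"
        using quilt_Suc_eq[of "n - 3"] True by (simp add: Suc_diff_Suc numeral_eq_Suc)
      then show ?thesis
        using IH[of "n - 8" "S - {n - 1, n - 3}"] FQ_legal_subset[OF legal] 2 True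
        by (auto simp: numeral_eq_Suc)
    next
      case False
      then have empty: "S - {n - 1, n - 3} = {}" using 2 by auto
      have "quilt (n - 3) < quilt (n - 2)" by (rule quilt_less) (use \<open>6 \<le> n\<close> in simp)
      then show ?thesis unfolding empty by simp
    qed
    then show ?thesis using split split2 succ by arith
  qed
qed

lemma sum_quilt_neq: "FQ_legal S \<Longrightarrow> S \<subseteq> {1..n} \<Longrightarrow> sum quilt S \<noteq> quilt (Suc n)"
proof (induction n arbitrary: S rule: less_induct)
  case (less n)
  note legal = less.prems(1) and sub = less.prems(2)
  show ?case
  proof (cases "n \<le> 5")
    case True
    then show ?thesis using sum_quilt_neq_small legal sub by blast
  next
    case False
    then have "6 \<le> n" by simp
    consider "n \<in> S" | "n \<notin> S" "n - 1 \<in> S" | "n \<notin> S" "n - 1 \<notin> S" by blast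
    then show ?thesis
    proof cases
      case 1
      then show ?thesis using sum_quilt_neq_if_max[OF less.IH \<open>6 \<le> n\<close> legal sub] by blast
    next
      case 2
      then show ?thesis using sum_quilt_neq_if_pred_max[OF less.IH \<open>6 \<le> n\<close> legal sub] by blast
    next
      case 3
      have "S \<subseteq> {1..n - 2}"
      proof
        fix x assume "x \<in> S"
        then have "1 \<le> x" "x \<le> n" "x \<noteq> n" "x \<noteq> n - 1" using 3 sub by auto
        then show "x \<in> {1..n - 2}" by simp
      qed
      then have "sum quilt S < quilt (n - 2 + 3)" using sum_quilt_less legal by blast
      moreover have "n - 2 + 3 = Suc n" using \<open>6 \<le> n\<close> by simp
      ultimately show ?thesis by simp
    qed
  qed
qed

lemma FQ_legal_insert:
  assumes "FQ_legal S" "S \<subseteq> {1..k}" "k + 5 \<le> n"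
  shows "FQ_legal (insert n S)"
  using assms unfolding FQ_legal_def by (fastforce simp: subset_iff)

lemma representable_below: "m < quilt (Suc n) \<Longrightarrow> \<exists>S\<subseteq>{1..n}. FQ_legal S \<and> sum quilt S = m"
proof (induction n arbitrary: m rule: less_induct)
  case (less n)
  show ?case
  proof (cases "n \<le> 5")
    case True
    consider "m = 0" | "1 \<le> m" "m \<le> n" | "n = 5" "m = 6"
      using True less.prems by (fastforce simp: le_Suc_eq numeral_eq_Suc)
    then show ?thesis
    proof cases
      case 1
      then show ?thesis by (intro exI[of _ "{}"]) (simp add: FQ_legal_def)
    next
      case 2
      then have "quilt m = m" using True by (auto simp: le_Suc_eq numeral_eq_Suc)
      then show ?thesis using 2 by (intro exI[of _ "{m}"]) (simp add: FQ_legal_def)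
    next
      case 3
      then show ?thesis by (intro exI[of _ "{2, 4}"]) (simp add: FQ_legal_def numeral_eq_Suc)
    qed
  next
    case False
    show ?thesis
    proof (cases "m < quilt n")
      case True
      then obtain S where "S \<subseteq> {1..n - 1}" "FQ_legal S" "sum quilt S = m"
        using less.IH[of "n - 1" m] False by auto
      moreover have "{1..n - 1} \<subseteq> {1..n}" by auto
      ultimately show ?thesis by blast
    next
      case False
      have "m - quilt n < quilt (Suc (n - 5))"
        using quilt_Suc_eq[of n] less.prems False \<open>\<not> n \<le> 5\<close> by (simp add: Suc_diff_Suc numeral_eq_Suc)
      then obtain S where S: "S \<subseteq> {1..n - 5}" "FQ_legal S" "sum quilt S = m - quilt n"
        using less.IH[of "n - 5"] \<open>\<not> n \<le> 5\<close> by auto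
      have "FQ_legal (insert n S)" using FQ_legal_insert[OF S(2,1)] \<open>\<not> n \<le> 5\<close> by simp
      moreover have "n \<notin> S" "finite S" using S(1) \<open>\<not> n \<le> 5\<close> finite_subset by auto
      then have "sum quilt (insert n S) = m" using S(3) False by simp
      moreover have "S \<subseteq> {1..n}" using S(1) by (rule order_trans) simp
      then have "insert n S \<subseteq> {1..n}" using \<open>\<not> n \<le> 5\<close> by simp
      ultimately show ?thesis by blast
    qed
  qed
qed

lemma FQ_next_quilt: "FQ_next (map quilt [1..<Suc n]) = quilt (Suc n)"
proof -
  have "(\<Sum>i\<in>S. map quilt [1..<Suc n] ! (i - 1)) = sum quilt S" if "S \<subseteq> {1..n}" for S
    using that by (intro sum.cong) (auto simp del: upt_Suc dest!: subsetD)
  then have legal_sum_iff: "(\<exists>S. S \<subseteq> {1..length (map quilt [1..<Suc n])} \<and> FQ_legal S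
      \<and> (\<Sum>i\<in>S. map quilt [1..<Suc n] ! (i - 1)) = m) \<longleftrightarrow> (\<exists>S\<subseteq>{1..n}. FQ_legal S \<and> sum quilt S = m)" for m
    by auto
  show ?thesis
    unfolding FQ_next_def legal_sum_iff
  proof (rule Least_equality)
    show "0 < quilt (Suc n) \<and> \<not> (\<exists>S\<subseteq>{1..n}. FQ_legal S \<and> sum quilt S = quilt (Suc n))"
      using quilt_less[of 0 "Suc n"] sum_quilt_neq by auto
  next
    show "quilt (Suc n) \<le> m" if "0 < m \<and> \<not> (\<exists>S\<subseteq>{1..n}. FQ_legal S \<and> sum quilt S = m)" for m
      using that representable_below[of m n] by (meson not_le)
  qed
qed

lemma FQ_list_eq: "FQ_list n = map quilt [1..<Suc n]"
proof (induction n)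
  case (Suc n)
  then show ?case using FQ_next_quilt[of n] by (simp add: upt_Suc_append del: upt_Suc)
qed simp

lemma fq_eq_quilt: "1 \<le> n \<Longrightarrow> fq n = quilt n"
  unfolding fq_def FQ_list_eq by (simp del: upt_Suc)

theorem mainTheorem8:
  shows "(\<forall>n\<ge>6. fq (n + 1) = fq n + fq (n - 4))
       \<and> (\<forall>n\<ge>5. fq (n + 1) = fq (n - 1) + fq (n - 2))
       \<and> (\<forall>n\<ge>1. int (\<Sum>i=1..n. fq i) = int (fq (n + 5)) - 6)"
proof (intro conjI allI impI)
  fix n :: nat assume "6 \<le> n"
  then show "fq (n + 1) = fq n + fq (n - 4)" using quilt_Suc_eq[of n] by (simp add: fq_eq_quilt)
next
  fix n :: nat assume "5 \<le> n"
  then show "fq (n + 1) = fq (n - 1) + fq (n - 2)" using quilt_rec[of "n + 1"] by (simp add: fq_eq_quilt)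
next
  fix n :: nat assume "1 \<le> n"
  then obtain k where k: "n = k + 1" by (intro that[of "n - 1"]) simp
  have "(\<Sum>i=1..n. fq i) = (\<Sum>i=1..k+1. quilt i)" unfolding k by (rule sum.cong) (auto simp: fq_eq_quilt)
  moreover have "fq (n + 5) = quilt (k + 6)" unfolding k by (simp add: fq_eq_quilt add.commute)
  ultimately have "(\<Sum>i=1..n. fq i) + 6 = fq (n + 5)" using sum_quilt_atLeastAtMost[of k] by simp
  then show "int (\<Sum>i=1..n. fq i) = int (fq (n + 5)) - 6" by linarith
qed

end
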